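(* Let $p$ be the probability measure on $\mathbb{N}=\{1,2,\ldots\}$ given by $p(n)=cn^{-5/4}$, where $1/c=\sum_{n=1}^\infty n^{-5/4}$. Then $p$ has finite Shannon entropy, and for every $\varepsilon>0$ there exist constants $K_\varepsilon,N_\varepsilon\in\mathbb{N}$ such that for every natural number $m\ge K_\varepsilon$ there exists a set $E_{\varepsilon,m}\subseteq\mathbb{N}^m$ with the following properties: (1) $p^{\times m}(E_{\varepsilon,m})\ge 1-\varepsilon$, where $p^{\times m}$ is the $m$-fold product measure; (2) for every $s=(s_1,\ldots,s_m)\in E_{\varepsilon,m}$, $\max\{s_1,\ldots,s_{K_\varepsilon}\}\le N_\varepsilon$; (3) for every $s\in E_{\varepsilon,m}$ and every $K_\varepsilon\le k\le m$, $\max\{s_1,\ldots,s_k\}\ge k^2$; (4) for every $s\in E_{\varepsilon,m}$ and every $K_\varepsilon\le k\le m$, the maximum of $\{s_1,\ldots,s_k\}$ is attained at exactly one index in $(s_1,\ldots,s_k)$.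
   Context: The Shannon entropy of a probability measure $p$ on $\mathbb{N}$ is $-\sum_n p(n)\log p(n)$. *)

theory Defs
  imports "HOL-Analysis.Analysis"
begin

definition zc :: real where
  "zc = 1 / (\<Sum>n. real (Suc n) powr (-5/4))"

text \<open>The probability mass function p(n) = c n^(-5/4) on N = {1,2,...};
  we put p 0 = 0 since 0 is not in the support.\<close>
definition p :: "nat \<Rightarrow> real" where
  "p n = (if n = 0 then 0 else zc * real n powr (-5/4))"

text \<open>Finite Shannon entropy: the series of -p(n) log p(n) converges
  (Isabelle has ln 0 = 0, matching the convention 0 log 0 = 0; all terms are
  nonnegative, so convergence is the same as finiteness).\<close>
definition finite_entropy :: "(nat \<Rightarrow> real) \<Rightarrow> bool" where
  "finite_entropy f \<longleftrightarrow> summable (\<lambda>n. - (f n * ln (f n)))"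

text \<open>N^m, represented as lists of length m with entries >= 1;
  s_i is s ! (i-1).\<close>
definition seqs :: "nat \<Rightarrow> nat list set" where
  "seqs m = {s. length s = m \<and> (\<forall>x\<in>set s. x \<ge> 1)}"

definition prod_measure :: "nat \<Rightarrow> nat list set \<Rightarrow> real" where
  "prod_measure m E = infsum (\<lambda>s. \<Prod>i<m. p (s ! i)) E"

end

(*
  Write P for the m-fold product of p. The good set is N^m minus three bad events, each a
  union of cylinder sets whose P-mass is a product of p-masses, so a union bound suffices.
  (a) s_i >= N for some i < K: mass at most K p[N,oo), small once N is large.
  (b) max(s_1..s_k) < k^2 for some k >= K: since p[k^2,oo) >= c k^(-1/2), the mass is at most
      the sum over k >= K of p[1,k^2)^k <= exp(-c sqrt k) = O(k^(-2)), a convergent tail.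
  (c) s_i = s_j = n for some i < j and n >= max(j+1,K)^2: mass at most the sum over i < j of
      the sum over such n of p(n)^2 = O(max(j+1,K)^(-5/2)), in total O(K^(-1/4)).
  Off these events every prefix maximum with k >= K is at least k^2, and a second index attaining
  it would be a tie as in (c). Finite entropy holds as -p(n) ln p(n) = O(n^(-5/4) ln n).
*)
theory Submission
  imports Defs
begin

lemma summable_powr_Suc:
  fixes a :: real
  assumes "a < -1"
  shows "summable (\<lambda>n. real (Suc n) powr a)"
  using summable_real_powr_iff[of a] assms summable_iff_shift[where k=1, of "\<lambda>n. real n powr a"]
  by simp

lemma power_powr:
  fixes x :: real
  assumes "x > 0"
  shows "(x ^ n) powr a = x powr (real n * a)"
  using assms by (simp add: powr_realpow[symmetric] powr_powr)

lemma exp_neg_le_fourth_power: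
  fixes y :: real
  assumes "y > 0"
  shows "exp (- y) \<le> 256 / y ^ 4"
proof -
  have "y / 4 \<le> exp (y / 4)"
    using exp_ge_add_one_self[of "y / 4"] by linarith
  then have "(y / 4) ^ 4 \<le> exp (y / 4) ^ 4"
    using assms by (intro power_mono) auto
  also have "exp (y / 4) ^ 4 = exp y"
    by (simp add: exp_of_nat_mult[symmetric])
  finally show ?thesis
    using assms by (simp add: exp_minus field_simps)
qed

lemma summable_tail_sums_le:
  fixes f :: "nat \<Rightarrow> real"
  assumes "summable f" "\<And>n. f n \<ge> 0" "d > 0"
  shows "\<exists>K0. \<forall>K\<ge>K0. \<forall>m. (\<Sum>k\<in>{K..m}. f k) \<le> d"
proof -
  obtain K0 where K0: "\<And>K. K \<ge> K0 \<Longrightarrow> norm (\<Sum>i. f (i + K)) < d"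
    using suminf_exist_split[OF assms(3,1)] by blast
  have "(\<Sum>k\<in>{K..m}. f k) \<le> d" if "K \<ge> K0" for K m
  proof (cases "K \<le> m")
    case True
    have "(\<Sum>k\<in>{K..m}. f k) = (\<Sum>i\<in>{0..m - K}. f (i + K))"
      using sum.atLeastAtMost_shift_0[OF True, of f] by (simp add: comp_def add.commute)
    also have "\<dots> \<le> (\<Sum>i. f (i + K))"
      using summable_ignore_initial_segment[OF assms(1)] assms(2) by (intro sum_le_suminf) auto
    finally show ?thesis
      using K0[OF that] by simp
  qed (use assms(3) in simp)
  then show ?thesis
    by blast
qed

lemma has_sum_mult_Times_nonneg:
  fixes f g :: "_ \<Rightarrow> real"
  assumes f: "(f has_sum a) A" and g: "(g has_sum b) B"
    and f_nonneg: "\<And>x. x \<in> A \<Longrightarrow> f x \<ge> 0" and g_nonneg: "\<And>y. y \<in> B \<Longrightarrow> g y \<ge> 0"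
  shows "((\<lambda>(x, y). f x * g y) has_sum a * b) (A \<times> B)"
proof (rule has_sum_SigmaI)
  have fiber: "((\<lambda>y. f x * g y) has_sum f x * b) B" for x
    using g by (rule has_sum_cmult_right)
  then show "((\<lambda>y. (\<lambda>(x, y). f x * g y) (x, y)) has_sum f x * b) B" for x
    by simp
  show sum: "((\<lambda>x. f x * b) has_sum a * b) A"
    using f by (rule has_sum_cmult_left)
  show "(\<lambda>(x, y). f x * g y) summable_on A \<times> B"
    using fiber has_sum_imp_summable[OF sum] f_nonneg g_nonneg
    by (intro summable_on_SigmaI[where g="\<lambda>x. f x * b"]) auto
qed

lemma nth_le_Max_take: "i < k \<Longrightarrow> k \<le> length s \<Longrightarrow> s ! i \<le> Max (set (take k s))"
  by (simp add: nth_image[symmetric])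

lemma Max_take_eq_nth:
  assumes "0 < k" "k \<le> length s"
  shows "\<exists>i<k. Max (set (take k s)) = s ! i"
proof -
  have "set (take k s) \<noteq> {}"
    using assms by auto
  then have "Max (set (take k s)) \<in> set (take k s)"
    by (intro Max_in) auto
  then show ?thesis
    using assms(2) by (auto simp: in_set_conv_nth)
qed

section \<open>The distribution p\<close>

lemma zc_pos: "zc > 0"
proof -
  have "0 < (\<Sum>n. real (Suc n) powr (-5/4))"
    by (rule suminf_pos[OF summable_powr_Suc]) simp_all
  then show ?thesis
    unfolding zc_def by simp
qed

lemma p_nonneg: "p n \<ge> 0"
  unfolding p_def using zc_pos by simp

lemma p_sums: "p sums 1"
proof -
  have "(\<lambda>n. zc * real (Suc n) powr (-5/4)) sums (zc * (\<Sum>n. real (Suc n) powr (-5/4)))"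
    by (intro sums_mult summable_sums summable_powr_Suc) simp
  moreover have "zc * (\<Sum>n. real (Suc n) powr (-5/4)) = 1"
    using zc_pos unfolding zc_def by simp
  ultimately have "(\<lambda>n. p (Suc n)) sums 1"
    unfolding p_def by simp
  then show ?thesis
    using sums_Suc_iff[of p 1] by (simp add: p_def)
qed

lemma p_has_sum: "(p has_sum 1) UNIV"
  using sums_nonneg_imp_has_sum[OF p_sums] p_nonneg by blast

lemma p_summable_on: "p summable_on A"
  using summable_on_subset_banach[OF has_sum_imp_summable[OF p_has_sum]] by blast

definition pmass :: "nat set \<Rightarrow> real" where
  "pmass X = infsum p X"

lemma pmass_has_sum: "(p has_sum pmass X) X"
  unfolding pmass_def using p_summable_on by (rule has_sum_infsum)

lemma pmass_nonneg: "pmass X \<ge> 0"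
  unfolding pmass_def by (simp add: infsum_nonneg p_nonneg)

lemma pmass_UNIV: "pmass UNIV = 1"
  unfolding pmass_def using p_has_sum by (rule infsumI)

lemma pmass_singleton: "pmass {n} = p n"
  unfolding pmass_def by simp

lemma pmass_lessThan: "pmass {..<n} = 1 - pmass {n..}"
proof -
  have "pmass ({..<n} \<union> {n..}) = pmass {..<n} + pmass {n..}"
    unfolding pmass_def by (rule infsum_Un_disjoint) (auto simp: p_summable_on)
  moreover have "{..<n} \<union> {n..} = UNIV"
    by auto
  ultimately show ?thesis
    using pmass_UNIV by simp
qed

lemma pmass_atLeast_small:
  assumes "d > 0"
  shows "\<exists>N\<ge>1. pmass {N..} \<le> d"
proof -
  obtain N0 where N0: "\<And>n. n \<ge> N0 \<Longrightarrow> dist (\<Sum>i<n. p i) 1 < d"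
    using p_sums assms unfolding sums_def lim_sequentially by blast
  have "pmass {max N0 1..} = 1 - (\<Sum>i<max N0 1. p i)"
    using pmass_lessThan[of "max N0 1"] by (simp add: pmass_def)
  then have "pmass {max N0 1..} \<le> d"
    using N0[of "max N0 1"] by (simp add: dist_real_def)
  then show ?thesis
    by (intro exI[of _ "max N0 1"]) simp
qed

lemma pmass_atLeast_lower: "\<exists>c>0. \<forall>M\<ge>1. c * real M powr (-1/4) \<le> pmass {M..}"
proof (intro exI[of _ "zc * 2 powr (-5/4)"] conjI allI impI)
  show "zc * 2 powr (-5/4) > 0"
    using zc_pos by simp
  fix M :: nat
  assume M: "M \<ge> 1"
  have lower: "zc * real (2 * M) powr (-5/4) \<le> p n" if "n \<in> {M..<2 * M}" for n
    using that M zc_pos by (auto simp: p_def intro!: mult_left_mono powr_mono2')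
  have "real M * real M powr (-5/4) = real M powr (-1/4)"
    by (simp add: powr_mult_base)
  then have "zc * 2 powr (-5/4) * real M powr (-1/4) = real M * (zc * real (2 * M) powr (-5/4))"
    by (simp add: powr_mult)
  also have "\<dots> \<le> sum p {M..<2 * M}"
    using sum_mono[of "{M..<2 * M}", OF lower] by simp
  also have "\<dots> \<le> pmass {M..}"
    by (rule finite_sum_le_has_sum[OF pmass_has_sum]) (auto simp: p_nonneg)
  finally show "zc * 2 powr (-5/4) * real M powr (-1/4) \<le> pmass {M..}" .
qed

lemma pmass_lessThan_square_power:
  "\<exists>C\<ge>0. \<forall>k\<ge>1. pmass {..<k ^ 2} ^ k \<le> C / real k ^ 2"
proof -
  obtain c where c: "c > 0" "\<And>M. M \<ge> 1 \<Longrightarrow> c * real M powr (-1/4) \<le> pmass {M..}"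
    using pmass_atLeast_lower by blast
  have "pmass {..<k ^ 2} ^ k \<le> 256 / c ^ 4 / real k ^ 2" if k: "k \<ge> 1" for k
  proof -
    define x where "x = c * real k powr (-1/2)"
    have "real (k ^ 2) powr (-1/4) = real k powr (-1/2)"
      using k by (simp add: power_powr)
    then have "pmass {..<k ^ 2} \<le> 1 - x"
      using c(2)[of "k ^ 2"] k unfolding pmass_lessThan x_def by simp
    also have "\<dots> \<le> exp (- x)"
      using exp_ge_add_one_self[of "- x"] by simp
    finally have "pmass {..<k ^ 2} ^ k \<le> exp (- x) ^ k"
      by (intro power_mono pmass_nonneg)
    also have "\<dots> = exp (- (real k * x))"
      by (simp add: exp_of_nat_mult[symmetric])
    also have "\<dots> \<le> 256 / (real k * x) ^ 4"
      using k c by (intro exp_neg_le_fourth_power) (simp add: x_def)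
    also have "(real k * x) ^ 4 = c ^ 4 * real k ^ 2"
    proof -
      have "real k * x = c * real k powr (1/2)"
        unfolding x_def using powr_mult_base[of "real k" "-1/2"] by (simp add: algebra_simps)
      then show ?thesis
        using k by (simp add: power_mult_distrib powr_power powr_realpow')
    qed
    finally show ?thesis
      by (simp add: field_simps)
  qed
  then show ?thesis
    by (intro exI[of _ "256 / c ^ 4"]) (use c in auto)
qed

lemma p_le_of_square_le:
  assumes "L \<ge> 1" "L ^ 2 \<le> n"
  shows "p n \<le> zc * real L powr (-5/2)"
proof -
  have "n \<ge> 1"
    using assms by (metis le_trans one_le_power)
  moreover have "real n powr (-5/4) \<le> real (L ^ 2) powr (-5/4)"
    using assms by (intro powr_mono2') auto
  moreover have "real (L ^ 2) powr (-5/4) = real L powr (-5/2)"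
    using assms(1) by (simp add: power_powr)
  ultimately show ?thesis
    unfolding p_def using zc_pos by simp
qed

lemma sum_p_square_le:
  assumes "L \<ge> 1" "finite G" "G \<subseteq> {L ^ 2..}"
  shows "(\<Sum>n\<in>G. p n ^ 2) \<le> zc * real L powr (-5/2)"
proof -
  have "(\<Sum>n\<in>G. p n ^ 2) \<le> (\<Sum>n\<in>G. zc * real L powr (-5/2) * p n)"
    unfolding power2_eq_square
    using assms p_le_of_square_le by (intro sum_mono mult_right_mono) (auto simp: p_nonneg)
  also have "\<dots> = zc * real L powr (-5/2) * sum p G"
    by (simp add: sum_distrib_left)
  also have "\<dots> \<le> zc * real L powr (-5/2)"
    using finite_sum_le_has_sum[OF p_has_sum assms(2)] zc_pos
    by (intro mult_left_le) (auto simp: p_nonneg sum_nonneg)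
  finally show ?thesis .
qed

lemma mult_max_powr_le:
  assumes "K \<ge> 1"
  shows "real j * real (max (j + 1) K) powr (-5/2) \<le> real K powr (-1/4) * real (Suc j) powr (-5/4)"
proof -
  define L where "L = real (max (j + 1) K)"
  have "L powr (-1/4) \<le> real K powr (-1/4)" "L powr (-9/4) \<le> real (Suc j) powr (-9/4)"
    using assms by (auto simp: L_def intro!: powr_mono2')
  then have L: "L powr (-5/2) \<le> real K powr (-1/4) * real (Suc j) powr (-9/4)"
    using powr_add[of L "-1/4" "-9/4"] by (simp add: mult_mono)
  have "real j * L powr (-5/2) \<le> real (Suc j) * (real K powr (-1/4) * real (Suc j) powr (-9/4))"
    by (rule mult_mono[OF _ L]) auto
  also have "\<dots> = real K powr (-1/4) * real (Suc j) powr (-5/4)"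
    using powr_mult_base[of "real (Suc j)" "-9/4"] by (simp only: mult.left_commute[of "real (Suc j)"]) simp
  finally show ?thesis
    unfolding L_def .
qed

lemma sum_tie_weights_le:
  assumes "K \<ge> 1"
  shows "(\<Sum>j<m. real j * (zc * real (max (j + 1) K) powr (-5/2))) \<le> real K powr (-1/4)"
proof -
  have "(\<Sum>j<m. real j * (zc * real (max (j + 1) K) powr (-5/2)))
      \<le> zc * real K powr (-1/4) * (\<Sum>j<m. real (Suc j) powr (-5/4))"
    unfolding sum_distrib_left
  proof (rule sum_mono)
    fix j
    have "real j * (zc * real (max (j + 1) K) powr (-5/2))
        = zc * (real j * real (max (j + 1) K) powr (-5/2))"
      by (simp add: algebra_simps)
    also have "\<dots> \<le> zc * (real K powr (-1/4) * real (Suc j) powr (-5/4))"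
      using mult_max_powr_le[OF assms] zc_pos by (intro mult_left_mono) auto
    finally show "real j * (zc * real (max (j + 1) K) powr (-5/2))
        \<le> zc * real K powr (-1/4) * real (Suc j) powr (-5/4)"
      by (simp add: mult.assoc)
  qed
  also have "\<dots> \<le> zc * real K powr (-1/4) * (\<Sum>n. real (Suc n) powr (-5/4))"
    using zc_pos by (intro mult_left_mono sum_le_suminf summable_powr_Suc) auto
  also have "\<dots> = real K powr (-1/4)"
    using zc_pos unfolding zc_def by simp
  finally show ?thesis .
qed

lemma finite_entropy_p: "finite_entropy p"
  unfolding finite_entropy_def
proof (rule summable_comparison_test'[where N=1])
  define C where "C = zc * (\<bar>ln zc\<bar> + 10)"
  show "summable (\<lambda>n. C * real n powr (-9/8))"
    by (rule summable_mult) (simp add: summable_real_powr_iff)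
  fix n :: nat
  assume "n \<ge> 1"
  define x where "x = real n"
  have x: "x \<ge> 1" and pn: "p n = zc * x powr (-5/4)"
    using \<open>n \<ge> 1\<close> unfolding p_def x_def by auto
  have "ln x / 8 \<le> x powr (1/8)"
    using ln_le_minus_one[of "x powr (1/8)"] x by (simp add: ln_powr)
  moreover have "\<bar>ln zc\<bar> \<le> \<bar>ln zc\<bar> * x powr (1/8)"
    using mult_left_mono[of 1 "x powr (1/8)" "\<bar>ln zc\<bar>"] x by (simp add: ge_one_powr_ge_zero)
  moreover have "ln (p n) = ln zc - 5/4 * ln x"
    unfolding pn using zc_pos x by (simp add: ln_mult)
  ultimately have "\<bar>ln (p n)\<bar> \<le> (\<bar>ln zc\<bar> + 10) * x powr (1/8)"
    using ln_ge_zero[OF x] unfolding distrib_right abs_le_iff by linarith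
  then have "p n * \<bar>ln (p n)\<bar> \<le> p n * ((\<bar>ln zc\<bar> + 10) * x powr (1/8))"
    using p_nonneg by (rule mult_left_mono)
  also have "\<dots> = C * (x powr (-5/4) * x powr (1/8))"
    unfolding C_def pn by (simp add: algebra_simps)
  finally have "p n * \<bar>ln (p n)\<bar> \<le> C * (x powr (-5/4) * x powr (1/8))" .
  then show "norm (- (p n * ln (p n))) \<le> C * real n powr (-9/8)"
    using p_nonneg[of n] by (simp add: abs_mult powr_add[symmetric] x_def)
qed

section \<open>Cylinder sets of sequences\<close>

definition cylinder :: "nat \<Rightarrow> (nat \<Rightarrow> nat set) \<Rightarrow> nat list set" where
  "cylinder m A = {s. length s = m \<and> (\<forall>i<m. s ! i \<in> A i)}"

definition prod_weight :: "nat \<Rightarrow> nat list \<Rightarrow> real" where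
  "prod_weight m s = (\<Prod>i<m. p (s ! i))"

lemma prod_weight_nonneg: "prod_weight m s \<ge> 0"
  unfolding prod_weight_def by (simp add: prod_nonneg p_nonneg)

lemma prod_weight_Cons: "prod_weight (Suc m) (x # xs) = p x * prod_weight m xs"
  unfolding prod_weight_def by (simp add: prod.lessThan_Suc_shift del: prod.lessThan_Suc)

lemma prod_weight_eq_0:
  assumes "length s = m" "0 \<in> set s"
  shows "prod_weight m s = 0"
proof -
  obtain i where "i < m" "s ! i = 0"
    using assms by (auto simp: in_set_conv_nth)
  then show ?thesis
    unfolding prod_weight_def by (intro prod_zero bexI[of _ i]) (simp_all add: p_def)
qed

lemma cylinder_Suc:
  "cylinder (Suc m) A = (\<lambda>(x, xs). x # xs) ` (A 0 \<times> cylinder m (\<lambda>i. A (Suc i)))"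
  unfolding cylinder_def
  by (auto simp: length_Suc_conv less_Suc_eq_0_disj image_iff) (metis nth_Cons_Suc)

lemma has_sum_cylinder:
  "(prod_weight m has_sum (\<Prod>i<m. pmass (A i))) (cylinder m A)"
proof (induction m arbitrary: A)
  case 0
  have "cylinder 0 A = {[]}"
    unfolding cylinder_def by auto
  then show ?case
    using has_sum_finite[of "{[]}" "\<lambda>_. 1 :: real"] by (simp add: prod_weight_def)
next
  case (Suc m)
  have "((prod_weight (Suc m) \<circ> (\<lambda>(x, xs). x # xs)) has_sum pmass (A 0) * (\<Prod>i<m. pmass (A (Suc i))))
      (A 0 \<times> cylinder m (\<lambda>i. A (Suc i)))"
    using has_sum_mult_Times_nonneg[OF pmass_has_sum Suc.IH]
    by (simp add: comp_def case_prod_unfold prod_weight_Cons p_nonneg prod_weight_nonneg)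
  moreover have "inj_on (\<lambda>(x, xs). x # xs) (A 0 \<times> cylinder m (\<lambda>i. A (Suc i)))"
    by (auto simp: inj_on_def)
  ultimately show ?case
    unfolding cylinder_Suc
    by (simp add: has_sum_reindex prod.lessThan_Suc_shift del: prod.lessThan_Suc)
qed

definition coord_cylinder :: "nat \<Rightarrow> nat set \<Rightarrow> nat set \<Rightarrow> nat list set" where
  "coord_cylinder m I X = cylinder m (\<lambda>i. if i \<in> I then X else UNIV)"

lemma mem_coord_cylinder:
  assumes "I \<subseteq> {..<m}"
  shows "s \<in> coord_cylinder m I X \<longleftrightarrow> length s = m \<and> (\<forall>i\<in>I. s ! i \<in> X)"
  using assms unfolding coord_cylinder_def cylinder_def by auto

lemma has_sum_coord_cylinder:
  assumes "I \<subseteq> {..<m}"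
  shows "(prod_weight m has_sum pmass X ^ card I) (coord_cylinder m I X)"
proof -
  have "(\<Prod>i<m. pmass (if i \<in> I then X else UNIV)) = (\<Prod>i<m. if i \<in> I then pmass X else 1)"
    by (intro prod.cong) (simp_all add: pmass_UNIV)
  also have "\<dots> = pmass X ^ card I"
    using Int_absorb1[OF assms] by (simp add: prod.If_cases Int_commute)
  finally show ?thesis
    unfolding coord_cylinder_def by (metis has_sum_cylinder)
qed

section \<open>Union bounds\<close>

text \<open>For nonnegative \<open>f\<close> this says \<open>infsum f X \<le> b\<close>; unlike \<open>infsum\<close>, it is subadditive over
  arbitrary unions without summability side conditions.\<close>

definition finite_sums_le :: "('a \<Rightarrow> real) \<Rightarrow> 'a set \<Rightarrow> real \<Rightarrow> bool" where
  "finite_sums_le f X b \<longleftrightarrow> (\<forall>F. finite F \<longrightarrow> F \<subseteq> X \<longrightarrow> sum f F \<le> b)"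

lemma finite_sums_le_has_sum:
  assumes "(f has_sum a) X" "\<And>x. x \<in> X \<Longrightarrow> f x \<ge> 0"
  shows "finite_sums_le f X a"
  unfolding finite_sums_le_def using finite_sum_le_has_sum assms by blast

lemma finite_sums_le_mono:
  "finite_sums_le f Y b \<Longrightarrow> X \<subseteq> Y \<Longrightarrow> b \<le> b' \<Longrightarrow> finite_sums_le f X b'"
  unfolding finite_sums_le_def by force

lemma finite_sums_le_Un:
  assumes "finite_sums_le f X a" "finite_sums_le f Y b"
  shows "finite_sums_le f (X \<union> Y) (a + b)"
  unfolding finite_sums_le_def
proof (intro allI impI)
  fix F
  assume F: "finite F" "F \<subseteq> X \<union> Y"
  have "sum f F = sum f (F \<inter> X) + sum f (F - X)"
    using F(1) by (metis sum.Int_Diff)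
  also have "\<dots> \<le> a + b"
    using assms F unfolding finite_sums_le_def by (intro add_mono) auto
  finally show "sum f F \<le> a + b" .
qed

lemma finite_sums_le_zero: "(\<And>x. x \<in> X \<Longrightarrow> f x = 0) \<Longrightarrow> finite_sums_le f X 0"
  unfolding finite_sums_le_def by (simp add: subset_iff)

lemma finite_sums_le_UN:
  assumes "\<And>j. j \<in> J \<Longrightarrow> finite_sums_le f (B j) (c j)"
    and "\<And>G. finite G \<Longrightarrow> G \<subseteq> J \<Longrightarrow> sum c G \<le> b"
  shows "finite_sums_le f (\<Union>j\<in>J. B j) b"
  unfolding finite_sums_le_def
proof (intro allI impI)
  fix F
  assume F: "finite F" "F \<subseteq> (\<Union>j\<in>J. B j)"
  then obtain h where h: "\<And>x. x \<in> F \<Longrightarrow> h x \<in> J \<and> x \<in> B (h x)"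
    by (metis UN_E subsetD)
  have "sum f F = (\<Sum>j\<in>h ` F. sum f {x\<in>F. h x = j})"
    using F(1) by (rule sum.image_gen)
  also have "\<dots> \<le> (\<Sum>j\<in>h ` F. c j)"
  proof (rule sum_mono)
    fix j
    assume "j \<in> h ` F"
    then have "j \<in> J" "{x\<in>F. h x = j} \<subseteq> B j"
      using h by force+
    then show "sum f {x\<in>F. h x = j} \<le> c j"
      using assms(1) F(1) unfolding finite_sums_le_def by simp
  qed
  also have "\<dots> \<le> b"
    using h F(1) by (intro assms(2)) auto
  finally show "sum f F \<le> b" .
qed

lemma finite_sums_le_UN_finite:
  assumes "finite J" "\<And>j. j \<in> J \<Longrightarrow> finite_sums_le f (B j) (c j)" "\<And>j. j \<in> J \<Longrightarrow> c j \<ge> 0"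
  shows "finite_sums_le f (\<Union>j\<in>J. B j) (\<Sum>j\<in>J. c j)"
  using assms by (intro finite_sums_le_UN) (auto intro: sum_mono2)

lemma prod_measure_ge:
  assumes "E \<subseteq> {s. length s = m}" "finite_sums_le (prod_weight m) ({s. length s = m} - E) b"
  shows "prod_measure m E \<ge> 1 - b"
proof -
  have "(prod_weight m has_sum 1) {s. length s = m}"
    using has_sum_cylinder[of m "\<lambda>_. UNIV"] by (simp add: cylinder_def pmass_UNIV)
  then have summable: "prod_weight m summable_on X" if "X \<subseteq> {s. length s = m}" for X
    using that has_sum_imp_summable summable_on_subset_banach by blast
  have "infsum (prod_weight m) E + infsum (prod_weight m) ({s. length s = m} - E) = 1"
    using infsum_Un_disjoint[OF summable summable, of E "{s. length s = m} - E"] assms(1)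
      infsumI[OF \<open>(prod_weight m has_sum 1) _\<close>] by (simp add: Un_absorb1)
  moreover have "infsum (prod_weight m) ({s. length s = m} - E) \<le> b"
    using assms(2) summable unfolding finite_sums_le_def by (intro infsum_le_finite_sums) auto
  ultimately show ?thesis
    unfolding prod_measure_def prod_weight_def by simp
qed

section \<open>The good sequences\<close>

definition large_early_entry :: "nat \<Rightarrow> nat \<Rightarrow> nat \<Rightarrow> nat list set" where
  "large_early_entry K N m = (\<Union>i<K. coord_cylinder m {i} {N..})"

definition small_prefix_max :: "nat \<Rightarrow> nat \<Rightarrow> nat list set" where
  "small_prefix_max K m = (\<Union>k\<in>{K..m}. coord_cylinder m {..<k} {..<k ^ 2})"

text \<open>The threshold is chosen so that a tie between \<open>s ! i\<close> and \<open>s ! j\<close> at a prefix maximum over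
  \<open>k \<ge> max (j + 1) K\<close> coordinates, which is at least \<open>k\<^sup>2\<close> off \<open>small_prefix_max K m\<close>, is caught here.\<close>

definition large_tie :: "nat \<Rightarrow> nat \<Rightarrow> nat list set" where
  "large_tie K m = (\<Union>j<m. \<Union>i<j. \<Union>n\<in>{(max (j + 1) K) ^ 2..}. coord_cylinder m {i, j} {n})"

definition good_seqs :: "nat \<Rightarrow> nat \<Rightarrow> nat \<Rightarrow> nat list set" where
  "good_seqs K N m = seqs m - (large_early_entry K N m \<union> small_prefix_max K m \<union> large_tie K m)"

lemma large_early_entry_bound:
  assumes "K \<le> m"
  shows "finite_sums_le (prod_weight m) (large_early_entry K N m) (real K * pmass {N..})"
proof -
  have "finite_sums_le (prod_weight m) (coord_cylinder m {i} {N..}) (pmass {N..})" if "i < K" for i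
    using has_sum_coord_cylinder[of "{i}" m "{N..}"] that assms
    by (intro finite_sums_le_has_sum) (auto simp: prod_weight_nonneg)
  then show ?thesis
    unfolding large_early_entry_def
    using finite_sums_le_UN_finite[of "{..<K}" "prod_weight m" _ "\<lambda>_. pmass {N..}"]
    by (simp add: pmass_nonneg)
qed

lemma small_prefix_max_bound:
  assumes "\<And>k. k \<ge> 1 \<Longrightarrow> pmass {..<k ^ 2} ^ k \<le> h k" "K \<ge> 1"
  shows "finite_sums_le (prod_weight m) (small_prefix_max K m) (\<Sum>k\<in>{K..m}. h k)"
  unfolding small_prefix_max_def
proof (rule finite_sums_le_UN_finite)
  fix k
  assume k: "k \<in> {K..m}"
  then show "finite_sums_le (prod_weight m) (coord_cylinder m {..<k} {..<k ^ 2}) (h k)"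
    using has_sum_coord_cylinder[of "{..<k}" m "{..<k ^ 2}"] assms
    by (intro finite_sums_le_mono[OF finite_sums_le_has_sum]) (auto simp: prod_weight_nonneg)
  have "pmass {..<k ^ 2} ^ k \<le> h k"
    using k assms by simp
  then show "h k \<ge> 0"
    by (rule order_trans[OF zero_le_power[OF pmass_nonneg]])
qed simp

lemma large_tie_bound:
  assumes "K \<ge> 1"
  shows "finite_sums_le (prod_weight m) (large_tie K m) (real K powr (-1/4))"
proof -
  define g where "g j = zc * real (max (j + 1) K) powr (-5/2)" for j
  have pair: "finite_sums_le (prod_weight m)
      (\<Union>n\<in>{(max (j + 1) K) ^ 2..}. coord_cylinder m {i, j} {n}) (g j)" if "i < j" "j < m" for i j
  proof (rule finite_sums_le_UN)
    fix n
    show "finite_sums_le (prod_weight m) (coord_cylinder m {i, j} {n}) (p n ^ 2)"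
      using has_sum_coord_cylinder[of "{i, j}" m "{n}"] that
      by (intro finite_sums_le_has_sum) (auto simp: prod_weight_nonneg pmass_singleton power2_eq_square)
  next
    fix G
    assume "finite G" "G \<subseteq> {(max (j + 1) K) ^ 2..}"
    then show "(\<Sum>n\<in>G. p n ^ 2) \<le> g j"
      unfolding g_def using assms by (intro sum_p_square_le) auto
  qed
  have g_nonneg: "g j \<ge> 0" for j
    unfolding g_def using zc_pos by simp
  have "finite_sums_le (prod_weight m) (large_tie K m) (\<Sum>j<m. \<Sum>i<j. g j)"
    unfolding large_tie_def using pair g_nonneg
    by (intro finite_sums_le_UN_finite sum_nonneg) auto
  then show ?thesis
    by (rule finite_sums_le_mono) (use sum_tie_weights_le[OF assms, of m] in \<open>simp_all add: g_def\<close>)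
qed

lemma prod_measure_good_seqs:
  assumes "1 \<le> K" "K \<le> m" "\<And>k. k \<ge> 1 \<Longrightarrow> pmass {..<k ^ 2} ^ k \<le> h k"
    and "real K * pmass {N..} + (\<Sum>k\<in>{K..m}. h k) + real K powr (-1/4) \<le> \<epsilon>"
  shows "prod_measure m (good_seqs K N m) \<ge> 1 - \<epsilon>"
proof (rule prod_measure_ge)
  show "good_seqs K N m \<subseteq> {s. length s = m}"
    unfolding good_seqs_def seqs_def by auto
  have "finite_sums_le (prod_weight m) ({s. length s = m} - seqs m) 0"
  proof (rule finite_sums_le_zero)
    fix s
    assume "s \<in> {s. length s = m} - seqs m"
    then have "length s = m" "0 \<in> set s"
      unfolding seqs_def by (auto simp: not_less_eq_eq)
    then show "prod_weight m s = 0"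
      by (rule prod_weight_eq_0)
  qed
  then have "finite_sums_le (prod_weight m)
      (({s. length s = m} - seqs m) \<union> large_early_entry K N m \<union> small_prefix_max K m \<union> large_tie K m)
      (0 + real K * pmass {N..} + (\<Sum>k\<in>{K..m}. h k) + real K powr (-1/4))"
    using large_early_entry_bound small_prefix_max_bound large_tie_bound assms(1-3)
    by (intro finite_sums_le_Un) auto
  then show "finite_sums_le (prod_weight m) ({s. length s = m} - good_seqs K N m) \<epsilon>"
    by (rule finite_sums_le_mono) (use assms(4) in \<open>auto simp: good_seqs_def\<close>)
qed

lemma good_seqs_length: "s \<in> good_seqs K N m \<Longrightarrow> length s = m"
  unfolding good_seqs_def seqs_def by simp

lemma good_seqs_take_le:
  assumes "s \<in> good_seqs K N m" "1 \<le> K" "K \<le> m"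
  shows "Max (set (take K s)) \<le> N"
proof -
  obtain i where i: "i < K" "Max (set (take K s)) = s ! i"
    using Max_take_eq_nth[of K s] assms good_seqs_length[OF assms(1)] by auto
  then have "s \<notin> coord_cylinder m {i} {N..}"
    using assms(1) unfolding good_seqs_def large_early_entry_def by blast
  then show ?thesis
    using i assms(3) good_seqs_length[OF assms(1)] by (simp add: mem_coord_cylinder)
qed

lemma good_seqs_prefix_max_ge:
  assumes "s \<in> good_seqs K N m" "K \<le> k" "k \<le> m"
  shows "k ^ 2 \<le> Max (set (take k s))"
proof -
  have "s \<notin> coord_cylinder m {..<k} {..<k ^ 2}"
    using assms unfolding good_seqs_def small_prefix_max_def by auto
  then obtain i where "i < k" "k ^ 2 \<le> s ! i"
    using assms(3) good_seqs_length[OF assms(1)] by (auto simp: mem_coord_cylinder not_less)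
  then show ?thesis
    using nth_le_Max_take[of i k s] assms(3) good_seqs_length[OF assms(1)] by simp
qed

lemma good_seqs_prefix_max_unique:
  assumes "s \<in> good_seqs K N m" "1 \<le> K" "K \<le> k" "k \<le> m"
  shows "card {i. i < k \<and> s ! i = Max (set (take k s))} = 1"
proof -
  define M where "M = Max (set (take k s))"
  obtain i0 where i0: "i0 < k" "s ! i0 = M"
    using Max_take_eq_nth[of k s] assms good_seqs_length[OF assms(1)] unfolding M_def by force
  have no_tie: "\<not> (s ! i = M \<and> s ! j = M)" if "i < j" "j < k" for i j
  proof
    assume "s ! i = M \<and> s ! j = M"
    then have "s \<in> coord_cylinder m {i, j} {M}"
      using that assms(4) good_seqs_length[OF assms(1)] by (simp add: mem_coord_cylinder)
    moreover have "(max (j + 1) K) ^ 2 \<le> k ^ 2"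
      using that assms(3) by (intro power_mono) auto
    then have "(max (j + 1) K) ^ 2 \<le> M"
      using good_seqs_prefix_max_ge[OF assms(1,3,4)] unfolding M_def by linarith
    ultimately have "s \<in> large_tie K m"
      unfolding large_tie_def using that assms(4) by fastforce
    then show False
      using assms(1) unfolding good_seqs_def by blast
  qed
  have "{i. i < k \<and> s ! i = M} = {i0}"
    using i0 no_tie by (auto intro: linorder_neqE_nat)
  then show ?thesis
    unfolding M_def by simp
qed

lemma good_parameters_exist:
  assumes "summable h" "\<And>k. h k \<ge> 0" "\<epsilon> > 0"
  shows "\<exists>K N. 1 \<le> K \<and> 1 \<le> N \<and>
    (\<forall>m. real K * pmass {N..} + (\<Sum>k\<in>{K..m}. h k) + real K powr (-1/4) \<le> \<epsilon>)"
proof -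
  obtain K0 where K0: "\<And>K m. K \<ge> K0 \<Longrightarrow> (\<Sum>k\<in>{K..m}. h k) \<le> \<epsilon> / 3"
    using summable_tail_sums_le[OF assms(1,2), of "\<epsilon> / 3"] assms(3) by auto
  define K where "K = max (max K0 (nat \<lceil>(3 / \<epsilon>) ^ 4\<rceil>)) 1"
  have K: "1 \<le> K" "K0 \<le> K" "(3 / \<epsilon>) ^ 4 \<le> real K"
    unfolding K_def by linarith+
  have "real K powr (-1/4) \<le> ((3 / \<epsilon>) ^ 4) powr (-1/4)"
    using K(3) assms(3) by (intro powr_mono2') auto
  also have "\<dots> = \<epsilon> / 3"
    using assms(3) by (simp add: power_powr powr_minus_divide)
  finally have K_powr: "real K powr (-1/4) \<le> \<epsilon> / 3" .
  obtain N where N: "N \<ge> 1" "pmass {N..} \<le> \<epsilon> / 3 / real K"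
    using pmass_atLeast_small[of "\<epsilon> / 3 / real K"] assms(3) K(1) by auto
  then have KN: "real K * pmass {N..} \<le> \<epsilon> / 3"
    using K(1) by (simp add: field_simps)
  have "\<forall>m. real K * pmass {N..} + (\<Sum>k\<in>{K..m}. h k) + real K powr (-1/4) \<le> \<epsilon>"
  proof
    fix m
    show "real K * pmass {N..} + (\<Sum>k\<in>{K..m}. h k) + real K powr (-1/4) \<le> \<epsilon>"
      using KN K0[OF K(2), of m] K_powr by linarith
  qed
  then show ?thesis
    using K(1) N(1) by blast
qed

theorem lemma2p5:
  shows "finite_entropy p \<and>
    (\<forall>\<epsilon>::real. \<epsilon> > 0 \<longrightarrow>
      (\<exists>K N :: nat. K \<ge> 1 \<and> N \<ge> 1 \<and>
        (\<forall>m. m \<ge> K \<longrightarrow>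
          (\<exists>E. E \<subseteq> seqs m \<and>
             prod_measure m E \<ge> 1 - \<epsilon> \<and>
             (\<forall>s\<in>E. Max (set (take K s)) \<le> N) \<and>
             (\<forall>s\<in>E. \<forall>k. K \<le> k \<and> k \<le> m \<longrightarrow> Max (set (take k s)) \<ge> k ^ 2) \<and>
             (\<forall>s\<in>E. \<forall>k. K \<le> k \<and> k \<le> m \<longrightarrow>
                card {i. i < k \<and> s ! i = Max (set (take k s))} = 1)))))"
proof (intro conjI allI impI, goal_cases)
  case 1
  show ?case
    by (rule finite_entropy_p)
next
  case (2 \<epsilon>)
  obtain C where C: "C \<ge> 0" "\<And>k. k \<ge> 1 \<Longrightarrow> pmass {..<k ^ 2} ^ k \<le> C / real k ^ 2"
    using pmass_lessThan_square_power by blast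
  have "summable (\<lambda>k. C / real k ^ 2)"
    using summable_mult[OF inverse_power_summable[of 2], of C] by (simp add: divide_inverse)
  then obtain K N where KN: "1 \<le> K" "1 \<le> N"
    "\<And>m. real K * pmass {N..} + (\<Sum>k\<in>{K..m}. C / real k ^ 2) + real K powr (-1/4) \<le> \<epsilon>"
    using good_parameters_exist[of "\<lambda>k. C / real k ^ 2" \<epsilon>] C(1) \<open>\<epsilon> > 0\<close> by auto
  show ?case
  proof (rule exI[of _ K], rule exI[of _ N], intro conjI allI impI KN(1,2), goal_cases)
    case (1 m)
    show ?case
      using prod_measure_good_seqs[OF KN(1) 1 C(2) KN(3)] good_seqs_take_le[OF _ KN(1) 1]
        good_seqs_prefix_max_ge good_seqs_prefix_max_unique[OF _ KN(1)]
      by (intro exI[of _ "good_seqs K N m"]) (auto simp: good_seqs_def)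
  qed
qed

end
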